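(* PARITY cannot be represented by normal programs: for every $n\ge 3$ there is no normal program $\Pi_n$ with $var(\Pi_n)=\{x_1,\dots,x_n\}$ and $Ans(\Pi_n)=$ PARITY$_n$. In particular there is no sequence of normal programs $\{\Pi_n\}_{n\ge1}$ with $Ans(\Pi_n)=$ PARITY$_n$ for all $n$.
   Context: A rule element is one of $\top$, $\bot$, $x$, $not\ x$, $not\ not\ x$, where $x$ is a variable. A (canonical) rule is $H\leftarrow B$ with $H$ a variable or $\bot$ and $B$ a finite set of rule elements; a canonical program is a finite set of rules; it is normal if it contains no occurrence of $not\ not$. For a set of variables $I$: $I\models\top$; $I\not\models\bot$; $I\models x$ iff $I\models not\ not\ x$ iff $x\in I$; $I\models not\ x$ iff $x\notin I$; $I\models B$ iff $I$ satisfies every element of $B$; $I$ is closed under $H\leftarrow B$ if $I\models B$ implies $I\models H$. The reduct $\Pi^I$ replaces $not\ not\ x$ by $\top$ if $x\in I$ else $\bot$, and $not\ x$ by $\top$ if $x\notin I$ else $\bot$; $I$ is an answer set of $\Pi$ if $I$ is the least set closed under all rules of $\Pi^I$; $Ans(\Pi)$ is the set of answer sets; $var(\Pi)$ is the set of variables occurring in $\Pi$. Strings $w\in\{0,1\}^n$ are identified with $\{x_i:w_i=1\}$. PARITY$_n$ is the set of strings in $\{0,1\}^n$ with an odd number of 1's. *)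

theory Defs
  imports Main
begin

(* Variables are natural numbers; variable x_i is represented by i. *)
datatype elem = ETop | EBot | EPos nat | ENeg nat | ENegNeg nat
datatype head = HVar nat | HBot

type_synonym rule = "head \<times> elem set"
type_synonym program = "rule set"

definition canonical_program :: "program \<Rightarrow> bool" where
  "canonical_program P \<longleftrightarrow> finite P \<and> (\<forall>r\<in>P. finite (snd r))"

definition normal :: "program \<Rightarrow> bool" where
  "normal P \<longleftrightarrow> (\<forall>r\<in>P. \<forall>x. ENegNeg x \<notin> snd r)"

fun sat_elem :: "nat set \<Rightarrow> elem \<Rightarrow> bool" where
  "sat_elem I ETop = True"
| "sat_elem I EBot = False"
| "sat_elem I (EPos x) = (x \<in> I)"
| "sat_elem I (ENeg x) = (x \<notin> I)"
| "sat_elem I (ENegNeg x) = (x \<in> I)"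

definition sat_body :: "nat set \<Rightarrow> elem set \<Rightarrow> bool" where
  "sat_body I B \<longleftrightarrow> (\<forall>e\<in>B. sat_elem I e)"

fun sat_head :: "nat set \<Rightarrow> head \<Rightarrow> bool" where
  "sat_head I (HVar x) = (x \<in> I)"
| "sat_head I HBot = False"

definition closed_under :: "nat set \<Rightarrow> rule \<Rightarrow> bool" where
  "closed_under I r \<longleftrightarrow> (sat_body I (snd r) \<longrightarrow> sat_head I (fst r))"

fun reduct_elem :: "nat set \<Rightarrow> elem \<Rightarrow> elem" where
  "reduct_elem I (ENegNeg x) = (if x \<in> I then ETop else EBot)"
| "reduct_elem I (ENeg x) = (if x \<notin> I then ETop else EBot)"
| "reduct_elem I e = e"

definition reduct :: "program \<Rightarrow> nat set \<Rightarrow> program" where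
  "reduct P I = (\<lambda>(h, B). (h, reduct_elem I ` B)) ` P"

definition answer_set :: "program \<Rightarrow> nat set \<Rightarrow> bool" where
  "answer_set P I \<longleftrightarrow>
     (\<forall>r\<in>reduct P I. closed_under I r) \<and>
     (\<forall>J. (\<forall>r\<in>reduct P I. closed_under J r) \<longrightarrow> I \<subseteq> J)"

definition Ans :: "program \<Rightarrow> nat set set" where
  "Ans P = {I. answer_set P I}"

fun elem_vars :: "elem \<Rightarrow> nat set" where
  "elem_vars (EPos x) = {x}"
| "elem_vars (ENeg x) = {x}"
| "elem_vars (ENegNeg x) = {x}"
| "elem_vars _ = {}"

fun head_vars :: "head \<Rightarrow> nat set" where
  "head_vars (HVar x) = {x}"
| "head_vars HBot = {}"

definition var :: "program \<Rightarrow> nat set" where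
  "var P = (\<Union>r\<in>P. head_vars (fst r) \<union> (\<Union>e\<in>snd r. elem_vars e))"

(* strings w in {0,1}^n identified with {x_i : w_i = 1}, i.e. subsets of {1..n} *)
definition PARITY :: "nat \<Rightarrow> nat set set" where
  "PARITY n = {S. S \<subseteq> {1..n} \<and> odd (card S)}"

end

theory Submission
  imports Defs
begin

text \<open>Answer sets of a normal program form an antichain: if I \<subseteq> J are both answer
sets, then every rule of the reduct by J, read in I, is implied by the corresponding rule of the
reduct by I (a larger set only falsifies more negative literals), so I is closed under the reduct
by J and minimality of J gives J \<subseteq> I. But PARITY contains the comparable strings
{x1} and {x1, x2, x3} as soon as n \<ge> 3.\<close>

lemma sat_reduct_elem_antimono:
  assumes "I \<subseteq> J" "\<forall>x. e \<noteq> ENegNeg x" "sat_elem I (reduct_elem J e)"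
  shows "sat_elem I (reduct_elem I e)"
  using assms by (cases e) (auto split: if_splits)

lemma answer_set_closed_under_larger_reduct:
  assumes normal: "normal P" and I: "answer_set P I" and "I \<subseteq> J"
  shows "\<forall>r\<in>reduct P J. closed_under I r"
proof
  fix r assume "r \<in> reduct P J"
  then obtain h B where hB: "(h, B) \<in> P" and r: "r = (h, reduct_elem J ` B)"
    unfolding reduct_def by auto
  have reduct_I: "(h, reduct_elem I ` B) \<in> reduct P I"
    unfolding reduct_def using hB by force
  have no_negneg: "\<forall>e\<in>B. \<forall>x. e \<noteq> ENegNeg x"
    using normal hB unfolding normal_def by fastforce
  show "closed_under I r"
    unfolding closed_under_def r
  proof (simp, rule impI)
    assume "sat_body I (reduct_elem J ` B)"
    then have "sat_body I (reduct_elem I ` B)"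
      using sat_reduct_elem_antimono[OF \<open>I \<subseteq> J\<close>] no_negneg unfolding sat_body_def by blast
    then show "sat_head I h"
      using I reduct_I unfolding answer_set_def closed_under_def by fastforce
  qed
qed

lemma normal_answer_sets_antichain:
  assumes "normal P" "answer_set P I" "answer_set P J" "I \<subseteq> J"
  shows "I = J"
proof -
  have "\<forall>r\<in>reduct P J. closed_under I r"
    using answer_set_closed_under_larger_reduct assms(1,2,4) .
  then have "J \<subseteq> I"
    using \<open>answer_set P J\<close> unfolding answer_set_def by blast
  then show ?thesis
    using \<open>I \<subseteq> J\<close> by blast
qed

lemma PARITY_comparable_members:
  "n \<ge> 3 \<Longrightarrow> {1::nat} \<in> PARITY n \<and> {1, 2, 3} \<in> PARITY n"
  unfolding PARITY_def by auto

lemma normal_Ans_ne_PARITY: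
  assumes "n \<ge> 3" "normal P"
  shows "Ans P \<noteq> PARITY n"
proof
  assume "Ans P = PARITY n"
  then have "answer_set P {1}" "answer_set P {1, 2, 3}"
    using PARITY_comparable_members[OF \<open>n \<ge> 3\<close>] unfolding Ans_def by auto
  then have "{1::nat} = {1, 2, 3}"
    using normal_answer_sets_antichain[OF \<open>normal P\<close>] by blast
  then show False by auto
qed

theorem mainTheorem5:
  shows "(\<forall>n\<ge>3. \<not> (\<exists>P. canonical_program P \<and> normal P \<and>
                        var P = {1..n} \<and> Ans P = PARITY n))
       \<and> \<not> (\<exists>P :: nat \<Rightarrow> program. \<forall>n\<ge>1.
                canonical_program (P n) \<and> normal (P n) \<and> Ans (P n) = PARITY n)"
proof
  show "\<forall>n\<ge>3. \<not> (\<exists>P. canonical_program P \<and> normal P \<and> var P = {1..n} \<and> Ans P = PARITY n)"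
    using normal_Ans_ne_PARITY by blast
  show "\<not> (\<exists>P :: nat \<Rightarrow> program. \<forall>n\<ge>1.
                canonical_program (P n) \<and> normal (P n) \<and> Ans (P n) = PARITY n)"
  proof
    assume "\<exists>P :: nat \<Rightarrow> program. \<forall>n\<ge>1.
              canonical_program (P n) \<and> normal (P n) \<and> Ans (P n) = PARITY n"
    then obtain P :: "nat \<Rightarrow> program"
      where "normal (P 3)" "Ans (P 3) = PARITY 3"
      by (metis one_le_numeral)
    then show False
      using normal_Ans_ne_PARITY[of 3] by auto
  qed
qed

end
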